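(* Let $p\geq 3$ and $0\leq a,d\leq p-1$ be integers, let $m\geq 3$, and let $A$ be an $m$-rowed simple $(0,1,2)$-matrix with $F(a,p,p,d)\not\prec A$. Fix any choice of associated vectors for the pairs of rows of $A$ (as described in the context), and let $B$ and $T$ be the corresponding matrix of unmarked columns and directed graph. If $|B|>2^m+m2^{m-1}-2^{m-3}$, then $T$ is transitive, i.e. whenever $i\to j$ and $j\to k$ are edges of $T$ for distinct $i,j,k$, then $i\to k$ is also an edge of $T$.
   Context: A simple matrix has no repeated columns; $|A|$ is the number of columns. $F\prec A$ means some submatrix of $A$ is a row/column permutation of $F$. $F(a,b,c,d)$ is the 2-rowed $(0,1)$-matrix with $a$ columns $\binom00$, $b$ columns $\binom10$, $c$ columns $\binom01$, $d$ columns $\binom11$. Associated vectors: to each pair $1\leq i<j\leq m$ one associates a vector $\binom{x}{y}\in\{\binom00,\binom01,\binom10,\binom11\}$ such that: if $\binom xy\in\{\binom01,\binom10\}$, there are at most $p-1$ columns $v$ of $A$ with $(v_i,v_j)=(x,y)$; if $\binom xy=\binom00$, at most $a-1$ such columns; if $\binom xy=\binom11$, at most $d-1$ such columns (such a vector exists since $F(a,p,p,d)\not\prec A$; if several are possible one is chosen arbitrarily). A column $v$ has a mark at $(i,j)$ if $(v_i,v_j)$ equals the vector associated with $(i,j)$. $B$ is the submatrix of columns of $A$ with no mark. $T$ is the directed graph on $[m]$ which, for each $i<j$, has the edge $i\to j$ if $\binom01$ is associated with $(i,j)$, the edge $j\to i$ if $\binom10$ is associated with $(i,j)$, and no edge between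 $i,j$ otherwise. *)

theory Defs
  imports Main
begin

text \<open>Matrices are represented column-wise: a column with k rows is a list of
length k; rows are indexed 0..k-1. A simple matrix is a set of distinct columns.\<close>

definition col_matrix :: "nat \<Rightarrow> nat set \<Rightarrow> nat list set \<Rightarrow> bool" where
  "col_matrix m S A \<longleftrightarrow> finite A \<and> (\<forall>v\<in>A. length v = m \<and> set v \<subseteq> S)"

definition simple012 :: "nat \<Rightarrow> nat list set \<Rightarrow> bool" where
  "simple012 m A \<longleftrightarrow> col_matrix m {0,1,2} A"

definition Fmat :: "nat \<Rightarrow> nat \<Rightarrow> nat \<Rightarrow> nat \<Rightarrow> nat list list" where
  "Fmat a b c d = replicate a [0,0] @ replicate b [1,0] @ replicate c [0,1] @ replicate d [1,1]"

text \<open>Configuration: F (k-rowed, columns listed) \<prec> A (m-rowed simple): some submatrix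
of A (choice of k distinct rows and length F distinct columns) is a row/column
permutation of F.\<close>
definition config :: "nat \<Rightarrow> nat list list \<Rightarrow> nat \<Rightarrow> nat list set \<Rightarrow> bool" where
  "config k F m A \<longleftrightarrow>
     (\<exists>\<sigma>::nat\<Rightarrow>nat. \<exists>\<tau>::nat\<Rightarrow>nat list.
        inj_on \<sigma> {..<k} \<and> \<sigma> ` {..<k} \<subseteq> {..<m} \<and>
        inj_on \<tau> {..<length F} \<and> \<tau> ` {..<length F} \<subseteq> A \<and>
        (\<forall>c<length F. \<forall>r<k. \<tau> c ! (\<sigma> r) = F ! c ! r))"

definition pair_count :: "nat list set \<Rightarrow> nat \<Rightarrow> nat \<Rightarrow> nat \<times> nat \<Rightarrow> nat" where
  "pair_count A i j xy = card {v\<in>A. (v ! i, v ! j) = xy}"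

definition assoc_vectors ::
  "nat \<Rightarrow> nat \<Rightarrow> nat \<Rightarrow> nat \<Rightarrow> nat list set \<Rightarrow> (nat \<Rightarrow> nat \<Rightarrow> nat \<times> nat) \<Rightarrow> bool" where
  "assoc_vectors a p d m A assoc \<longleftrightarrow>
     (\<forall>i j. i < j \<and> j < m \<longrightarrow>
        assoc i j \<in> {(0,0),(0,1),(1,0),(1,1)} \<and>
        (assoc i j \<in> {(0,1),(1,0)} \<longrightarrow> int (pair_count A i j (assoc i j)) \<le> int p - 1) \<and>
        (assoc i j = (0,0) \<longrightarrow> int (pair_count A i j (assoc i j)) \<le> int a - 1) \<and>
        (assoc i j = (1,1) \<longrightarrow> int (pair_count A i j (assoc i j)) \<le> int d - 1))"

definition unmarked :: "nat \<Rightarrow> nat list set \<Rightarrow> (nat \<Rightarrow> nat \<Rightarrow> nat \<times> nat) \<Rightarrow> nat list set" where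
  "unmarked m A assoc = {v\<in>A. \<forall>i j. i < j \<and> j < m \<longrightarrow> (v ! i, v ! j) \<noteq> assoc i j}"

definition T_edge :: "nat \<Rightarrow> (nat \<Rightarrow> nat \<Rightarrow> nat \<times> nat) \<Rightarrow> nat \<Rightarrow> nat \<Rightarrow> bool" where
  "T_edge m assoc i j \<longleftrightarrow> i < m \<and> j < m \<and>
     ((i < j \<and> assoc i j = (0,1)) \<or> (j < i \<and> assoc j i = (1,0)))"

end

theory Submission
  imports Defs "HOL-Library.FuncSet"
begin

(* Group the columns of B by the set S of rows in which they are 0 or 1. Restricted to S, the
   columns of one group form a simple (0,1)-matrix in which every pair of rows q, r avoids one
   pattern, the vector associated with (q, r). Such a matrix has at most |S| + 1 columns: deleting
   a row r merges at most one pair of columns, because two merged pairs differ in some row q, and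
   then rows q, r would show all four patterns. If i -> j -> k but not i -> k, only three column
   patterns survive on the rows i, j, k, so the groups with {i, j, k} \<subseteq> S have at most |S|
   columns. Summing over S gives |B| \<le> m 2^(m-1) + 2^m - 2^(m-3). *)

(* X is a (0,1)-matrix with row set S, a column being an element of S \<rightarrow>\<^sub>E {0,1}; forb q r is the
   pattern that no column shows in the rows q, r. *)
definition avoids_pairs :: "'a set \<Rightarrow> ('a \<Rightarrow> 'a \<Rightarrow> nat \<times> nat) \<Rightarrow> ('a \<Rightarrow> nat) set \<Rightarrow> bool" where
  "avoids_pairs S forb X \<longleftrightarrow>
     (\<forall>q\<in>S. \<forall>r\<in>S. q \<noteq> r \<longrightarrow> forb q r \<in> {0,1} \<times> {0,1} \<and> (\<forall>w\<in>X. (w q, w r) \<noteq> forb q r))"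

lemma image_restrict_PiE_subset:
  assumes "X \<subseteq> S \<rightarrow>\<^sub>E B" and "S' \<subseteq> S"
  shows "(\<lambda>w. restrict w S') ` X \<subseteq> S' \<rightarrow>\<^sub>E B"
proof clarify
  fix w assume "w \<in> X"
  then show "restrict w S' \<in> S' \<rightarrow>\<^sub>E B"
    using PiE_mem[OF subsetD[OF assms(1)]] assms(2) by (auto simp: restrict_PiE_iff)
qed

lemma avoids_pairs_range:
  "avoids_pairs S forb X \<Longrightarrow> q \<in> S \<Longrightarrow> r \<in> S \<Longrightarrow> q \<noteq> r \<Longrightarrow> forb q r \<in> {0,1} \<times> {0,1}"
  unfolding avoids_pairs_def by blast

lemma avoids_pairsD:
  "avoids_pairs S forb X \<Longrightarrow> q \<in> S \<Longrightarrow> r \<in> S \<Longrightarrow> q \<noteq> r \<Longrightarrow> w \<in> X \<Longrightarrow> (w q, w r) \<noteq> forb q r"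
  unfolding avoids_pairs_def by blast

lemma avoids_pairs_restrict:
  assumes "avoids_pairs S forb X" and "S' \<subseteq> S"
  shows "avoids_pairs S' forb ((\<lambda>w. restrict w S') ` X)"
  using assms unfolding avoids_pairs_def by (simp add: subset_iff)

lemma avoids_pairs_of_less:
  fixes S :: "'a::linorder set"
  assumes "\<And>q r. q \<in> S \<Longrightarrow> r \<in> S \<Longrightarrow> q < r \<Longrightarrow>
      forb q r \<in> {0,1} \<times> {0,1} \<and> (\<forall>w\<in>X. (w q, w r) \<noteq> forb q r)"
    and "\<And>q r. r < q \<Longrightarrow> forb q r = prod.swap (forb r q)"
  shows "avoids_pairs S forb X"
  unfolding avoids_pairs_def
proof (intro ballI impI)
  fix q r assume "q \<in> S" "r \<in> S" "q \<noteq> r"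
  then consider "q < r" | "r < q" by fastforce
  then show "forb q r \<in> {0,1} \<times> {0,1} \<and> (\<forall>w\<in>X. (w q, w r) \<noteq> forb q r)"
  proof cases
    case 1
    then show ?thesis using assms(1) \<open>q \<in> S\<close> \<open>r \<in> S\<close> by blast
  next
    case 2
    then show ?thesis
      using assms(1)[OF \<open>r \<in> S\<close> \<open>q \<in> S\<close>] assms(2) by (cases "forb r q") auto
  qed
qed

lemma avoids_pairs_extensions_eq:
  assumes avoid: "avoids_pairs (insert r S) forb X" and "r \<notin> S"
    and y: "y \<in> S \<rightarrow>\<^sub>E {0,1}" "y(r := 0) \<in> X" "y(r := 1) \<in> X"
    and z: "z \<in> S \<rightarrow>\<^sub>E {0,1}" "z(r := 0) \<in> X" "z(r := 1) \<in> X"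
  shows "y = z"
proof (rule ccontr)
  assume "y \<noteq> z"
  then obtain q where yz: "y q \<noteq> z q" by auto
  then have q: "q \<in> S" using y(1) z(1) PiE_arb by metis
  with \<open>r \<notin> S\<close> have "q \<noteq> r" by auto
  have realized: "(w q, w r) \<noteq> forb q r" if "w \<in> X" for w
    using avoids_pairsD[OF avoid _ _ \<open>q \<noteq> r\<close> that] q by simp
  have "forb q r \<in> {0,1} \<times> {0,1}"
    using avoids_pairs_range[OF avoid _ _ \<open>q \<noteq> r\<close>] q by simp
  then obtain \<alpha> \<beta> where forb: "forb q r = (\<alpha>, \<beta>)" "\<alpha> \<in> {0,1}" "\<beta> \<in> {0,1}"
    by blast
  have "{y q, z q} = {0,1}" using yz PiE_mem[OF y(1) q] PiE_mem[OF z(1) q] by auto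
  then have "\<alpha> = y q \<or> \<alpha> = z q" using forb(2) by blast
  then obtain u where u: "u \<in> {y, z}" "u q = \<alpha>" by blast
  have "u(r := \<beta>) \<in> X" using u(1) forb(3) y z by auto
  moreover have "((u(r := \<beta>)) q, (u(r := \<beta>)) r) = forb q r" using u(2) forb(1) \<open>q \<noteq> r\<close> by simp
  ultimately show False using realized by blast
qed

lemma card_le_card_delete_row:
  assumes "finite S" and X: "X \<subseteq> insert r S \<rightarrow>\<^sub>E {0,1}"
    and avoid: "avoids_pairs (insert r S) forb X" and "r \<notin> S"
  shows "card X \<le> card ((\<lambda>w. restrict w S) ` X) + 1"
proof -
  let ?del = "\<lambda>w. restrict w S"
  define X\<^sub>0 X\<^sub>1 where "X\<^sub>0 = {w\<in>X. w r = 0}" and "X\<^sub>1 = {w\<in>X. w r = 1}"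
  have finite_X: "finite X"
    using X by (rule finite_subset) (simp add: \<open>finite S\<close> finite_PiE)
  have bit: "w r \<in> {0,1}" if "w \<in> X" for w
    using PiE_mem[OF subsetD[OF X that]] by blast
  have partition: "X = X\<^sub>0 \<union> X\<^sub>1" "X\<^sub>0 \<inter> X\<^sub>1 = {}"
    unfolding X\<^sub>0_def X\<^sub>1_def using bit by auto
  have undelete: "(?del w)(r := w r) = w" if "w \<in> X" for w
    using restrict_upd[OF \<open>r \<notin> S\<close>, of w "w r"] PiE_restrict[OF subsetD[OF X that]] by simp
  have del_range: "?del w \<in> S \<rightarrow>\<^sub>E {0,1}" if "w \<in> X" for w
    using image_restrict_PiE_subset[OF X, of S] that by blast
  have inj: "inj_on ?del {w\<in>X. w r = c}" for c
    by (rule inj_on_inverseI[of _ "\<lambda>y. y(r := c)"]) (use undelete in auto)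
  have extend: "y(r := c) \<in> X" if "y \<in> ?del ` {w\<in>X. w r = c}" for y c
  proof -
    from that obtain w where "w \<in> X" "w r = c" "y = ?del w" by blast
    then show ?thesis using undelete by auto
  qed
  have doubled: "y \<in> S \<rightarrow>\<^sub>E {0,1} \<and> y(r := 0) \<in> X \<and> y(r := 1) \<in> X"
    if "y \<in> ?del ` X\<^sub>0 \<inter> ?del ` X\<^sub>1" for y
  proof -
    from that obtain w where "w \<in> X" "y = ?del w" unfolding X\<^sub>0_def by auto
    then show ?thesis using that extend del_range unfolding X\<^sub>0_def X\<^sub>1_def by auto
  qed
  have unique: "y = z" if "y \<in> ?del ` X\<^sub>0 \<inter> ?del ` X\<^sub>1" "z \<in> ?del ` X\<^sub>0 \<inter> ?del ` X\<^sub>1" for y z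
    using avoids_pairs_extensions_eq[OF avoid \<open>r \<notin> S\<close>] doubled[OF that(1)] doubled[OF that(2)]
    by blast
  have fin01: "finite X\<^sub>0" "finite X\<^sub>1"
    using finite_X unfolding X\<^sub>0_def X\<^sub>1_def by simp_all
  have overlap: "card (?del ` X\<^sub>0 \<inter> ?del ` X\<^sub>1) \<le> 1"
    using card_le_Suc0_iff_eq[of "?del ` X\<^sub>0 \<inter> ?del ` X\<^sub>1"] fin01 unique
    by (metis One_nat_def finite_Int finite_imageI)
  have "card X = card X\<^sub>0 + card X\<^sub>1"
    unfolding partition(1) using fin01 partition(2) by (rule card_Un_disjoint)
  also have "\<dots> = card (?del ` X\<^sub>0) + card (?del ` X\<^sub>1)"
    using inj by (simp add: card_image X\<^sub>0_def X\<^sub>1_def)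
  also have "\<dots> = card (?del ` X\<^sub>0 \<union> ?del ` X\<^sub>1) + card (?del ` X\<^sub>0 \<inter> ?del ` X\<^sub>1)"
    using fin01 by (intro card_Un_Int) simp_all
  also have "?del ` X\<^sub>0 \<union> ?del ` X\<^sub>1 = ?del ` X"
    unfolding partition(1) by (rule image_Un[symmetric])
  finally show ?thesis using overlap by linarith
qed

lemma monotone_bits:
  fixes x y z :: nat
  assumes "x \<in> {0,1}" "y \<in> {0,1}" "z \<in> {0,1}" "(x,y) \<noteq> (0,1)" "(y,z) \<noteq> (0,1)"
  shows "(x,y,z) \<in> {(1,1,1), (1,1,0), (1,0,0), (0,0,0)}"
  using assms by auto

lemma card_intransitive_triple_le:
  assumes X: "X \<subseteq> {i,j,k} \<rightarrow>\<^sub>E {0,1}" and avoid: "avoids_pairs {i,j,k} forb X"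
    and distinct: "i \<noteq> j" "j \<noteq> k" "i \<noteq> k"
    and "forb i j = (0,1)" "forb j k = (0,1)" "forb i k \<noteq> (0,1)"
  shows "card X \<le> 3"
proof -
  let ?triple = "\<lambda>w. (w i, w j, w k)"
  let ?Q = "{(1,1,1), (1,1,0), (1,0,0), (0,0,0)} :: (nat \<times> nat \<times> nat) set"
  have "forb i k \<in> {0,1} \<times> {0,1}"
    using avoids_pairs_range[OF avoid] distinct by simp
  then have "forb i k \<in> {(0,0), (1,0), (1,1)}"
    using \<open>forb i k \<noteq> (0,1)\<close> by auto
  then have "\<exists>t\<in>?Q. (fst t, snd (snd t)) = forb i k"
    by auto
  then obtain t where t: "t \<in> ?Q" "(fst t, snd (snd t)) = forb i k"
    by blast
  have "inj_on ?triple X"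
  proof (rule inj_onI)
    fix w w' assume "w \<in> X" "w' \<in> X" "?triple w = ?triple w'"
    then show "w = w'"
      using X by (intro extensionalityI[of _ "{i,j,k}"]) (auto simp: PiE_iff)
  qed
  then have "card X = card (?triple ` X)" by (rule card_image[symmetric])
  also have "\<dots> \<le> card (?Q - {t})"
  proof (rule card_mono)
    show "?triple ` X \<subseteq> ?Q - {t}"
    proof clarify
      fix w assume "w \<in> X"
      then have "w i \<in> {0,1}" "w j \<in> {0,1}" "w k \<in> {0,1}"
        using PiE_mem[OF subsetD[OF X]] by blast+
      moreover have "(w i, w j) \<noteq> forb i j" "(w j, w k) \<noteq> forb j k" "(w i, w k) \<noteq> forb i k"
        using avoids_pairsD[OF avoid _ _ _ \<open>w \<in> X\<close>] distinct by simp_all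
      ultimately show "?triple w \<in> ?Q - {t}"
        using monotone_bits[of "w i" "w j" "w k"] assms(6,7) t(2) by auto
    qed
  qed simp
  also have "\<dots> = 3"
    using t(1) by (simp add: card_Diff_singleton)
  finally show ?thesis .
qed

lemma card_le_card_restrict_add:
  assumes "finite T" and "finite S" and "S \<inter> T = {}"
    and "X \<subseteq> S \<union> T \<rightarrow>\<^sub>E {0,1}" and "avoids_pairs (S \<union> T) forb X"
  shows "card X \<le> card ((\<lambda>w. restrict w S) ` X) + card T"
  using assms(1,3-5)
proof (induction T arbitrary: X rule: finite_induct)
  case empty
  have "restrict w S = w" if "w \<in> X" for w
    using that empty.prems(2) by (auto intro: PiE_restrict)
  then show ?case by simp
next
  case (insert r T)
  let ?Y = "(\<lambda>w. restrict w (S \<union> T)) ` X"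
  have r: "r \<notin> S \<union> T" using insert by auto
  have "S \<union> insert r T = insert r (S \<union> T)" by auto
  then have X: "X \<subseteq> insert r (S \<union> T) \<rightarrow>\<^sub>E {0,1}" "avoids_pairs (insert r (S \<union> T)) forb X"
    using insert.prems by simp_all
  have "card X \<le> card ?Y + 1"
    using card_le_card_delete_row[OF _ X r] \<open>finite S\<close> \<open>finite T\<close> by simp
  also have "card ?Y \<le> card ((\<lambda>w. restrict w S) ` ?Y) + card T"
  proof (rule insert.IH)
    show "S \<inter> T = {}" using insert.prems(1) by auto
    show "?Y \<subseteq> S \<union> T \<rightarrow>\<^sub>E {0,1}"
      by (rule image_restrict_PiE_subset[OF X(1)]) blast
    show "avoids_pairs (S \<union> T) forb ?Y"
      by (rule avoids_pairs_restrict[OF X(2)]) blast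
  qed
  also have "(\<lambda>w. restrict w S) ` ?Y = (\<lambda>w. restrict w S) ` X"
    by (simp add: image_image Int_absorb1)
  finally show ?case using card_insert_disjoint[OF insert.hyps] by linarith
qed

corollary card_avoids_pairs_le:
  assumes "finite S" and "X \<subseteq> S \<rightarrow>\<^sub>E {0,1}" and "avoids_pairs S forb X"
  shows "card X \<le> card S + 1"
proof -
  have vanishing: "(\<lambda>w. restrict w {}) ` X \<subseteq> {\<lambda>_. undefined}"
    by (auto simp: restrict_def)
  have "card X \<le> card ((\<lambda>w. restrict w {}) ` X) + card S"
    using card_le_card_restrict_add[of S "{}"] assms by simp
  also have "card ((\<lambda>w. restrict w {}) ` X) \<le> 1"
    using card_mono[OF _ vanishing] by simp
  finally show ?thesis by simp
qed

corollary card_avoids_pairs_intransitive_le: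
  assumes "finite S" and "X \<subseteq> S \<rightarrow>\<^sub>E {0,1}" and avoid: "avoids_pairs S forb X"
    and "{i,j,k} \<subseteq> S" and "i \<noteq> j" "j \<noteq> k" "i \<noteq> k"
    and "forb i j = (0,1)" "forb j k = (0,1)" "forb i k \<noteq> (0,1)"
  shows "card X \<le> card S"
proof -
  let ?K = "{i,j,k}"
  have S: "?K \<union> (S - ?K) = S" using assms(4) by auto
  have "card X \<le> card ((\<lambda>w. restrict w ?K) ` X) + card (S - ?K)"
    using card_le_card_restrict_add[of "S - ?K" ?K X forb, unfolded S] assms(1-3) by simp
  also have "card ((\<lambda>w. restrict w ?K) ` X) \<le> 3"
  proof (rule card_intransitive_triple_le)
    show "(\<lambda>w. restrict w ?K) ` X \<subseteq> ?K \<rightarrow>\<^sub>E {0,1}"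
      by (rule image_restrict_PiE_subset[OF assms(2,4)])
    show "avoids_pairs ?K forb ((\<lambda>w. restrict w ?K) ` X)"
      by (rule avoids_pairs_restrict[OF avoid assms(4)])
  qed (use assms in auto)
  also have "card (S - ?K) = card S - 3"
    using assms by (simp add: card_Diff_subset)
  finally show ?thesis
    using card_mono[OF \<open>finite S\<close> assms(4)] assms(5-7) by simp
qed

lemma card_Pow_supersets:
  assumes "finite A" and "K \<subseteq> A"
  shows "card {S \<in> Pow A. K \<subseteq> S} = 2 ^ (card A - card K)"
proof -
  have "bij_betw (\<lambda>S. S \<union> K) (Pow (A - K)) {S \<in> Pow A. K \<subseteq> S}"
    by (rule bij_betw_byWitness[where f' = "\<lambda>S. S - K"]) (use assms(2) in auto)
  then have "card {S \<in> Pow A. K \<subseteq> S} = card (Pow (A - K))"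
    by (simp add: bij_betw_same_card)
  also have "\<dots> = 2 ^ (card A - card K)"
    using assms by (simp add: card_Pow card_Diff_subset finite_subset)
  finally show ?thesis .
qed

lemma sum_card_Pow:
  assumes "finite A"
  shows "(\<Sum>S\<in>Pow A. card S) = card A * 2 ^ (card A - 1)"
proof -
  have "(\<Sum>S\<in>Pow A. card S) = (\<Sum>S\<in>Pow A. card (A - S))"
    by (rule sum.reindex_bij_witness[of _ "\<lambda>S. A - S" "\<lambda>S. A - S"]) (auto simp: double_diff)
  then have "2 * (\<Sum>S\<in>Pow A. card S) = (\<Sum>S\<in>Pow A. card S + card (A - S))"
    by (simp add: sum.distrib)
  also have "\<dots> = (\<Sum>S\<in>Pow A. card A)"
    using assms by (intro sum.cong) (auto simp: card_Diff_subset finite_subset card_mono)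
  also have "\<dots> = card A * 2 ^ card A"
    using assms by (simp add: card_Pow)
  finally show ?thesis
    by (cases "card A") simp_all
qed

definition assoc_oriented :: "(nat \<Rightarrow> nat \<Rightarrow> nat \<times> nat) \<Rightarrow> nat \<Rightarrow> nat \<Rightarrow> nat \<times> nat" where
  "assoc_oriented assoc q r = (if q < r then assoc q r else prod.swap (assoc r q))"

lemma T_edge_iff_assoc_oriented:
  "T_edge m assoc i j \<longleftrightarrow> i < m \<and> j < m \<and> i \<noteq> j \<and> assoc_oriented assoc i j = (0,1)"
  unfolding T_edge_def assoc_oriented_def by (cases "assoc j i") auto

definition binary_rows :: "nat \<Rightarrow> nat list \<Rightarrow> nat set" where
  "binary_rows m v = {r. r < m \<and> v ! r \<noteq> 2}"

lemma unmarked_block_restrict: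
  assumes "simple012 m A" and range: "\<forall>q r. q < r \<and> r < m \<longrightarrow> assoc q r \<in> {0,1} \<times> {0,1}"
    and "S \<subseteq> {..<m}"
  defines "block \<equiv> {v \<in> unmarked m A assoc. binary_rows m v = S}"
  shows "inj_on (\<lambda>v. restrict (nth v) S) block"
    and "(\<lambda>v. restrict (nth v) S) ` block \<subseteq> S \<rightarrow>\<^sub>E {0,1}"
    and "avoids_pairs S (assoc_oriented assoc) ((\<lambda>v. restrict (nth v) S) ` block)"
proof -
  have column: "length v = m" "set v \<subseteq> {0,1,2}" if "v \<in> block" for v
    using that assms(1) unfolding block_def unmarked_def simple012_def col_matrix_def by auto
  have entry: "v ! r \<in> {0,1}" if "v \<in> block" "r \<in> S" for v r
  proof -
    have "r < m" "v ! r \<noteq> 2"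
      using that unfolding block_def binary_rows_def by auto
    then have "v ! r \<in> set v"
      using column(1)[OF that(1)] by simp
    with column(2)[OF that(1)] \<open>v ! r \<noteq> 2\<close> show ?thesis by blast
  qed
  have off: "v ! r = 2" if "v \<in> block" "r < m" "r \<notin> S" for v r
    using that unfolding block_def binary_rows_def by auto
  show "inj_on (\<lambda>v. restrict (nth v) S) block"
  proof (rule inj_onI)
    fix v w assume v: "v \<in> block" and w: "w \<in> block"
      and eq: "restrict (nth v) S = restrict (nth w) S"
    show "v = w"
    proof (rule nth_equalityI)
      show "length v = length w" using column v w by simp
      fix r assume "r < length v"
      then show "v ! r = w ! r"
        using fun_cong[OF eq, of r] off[OF v] off[OF w] column(1)[OF v] by (cases "r \<in> S") auto
    qed
  qed
  show "(\<lambda>v. restrict (nth v) S) ` block \<subseteq> S \<rightarrow>\<^sub>E {0,1}"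
    unfolding image_subset_iff restrict_PiE_iff using entry by blast
  show "avoids_pairs S (assoc_oriented assoc) ((\<lambda>v. restrict (nth v) S) ` block)"
  proof (rule avoids_pairs_of_less)
    fix q r assume "q \<in> S" "r \<in> S" "q < r"
    moreover have "r < m" using \<open>r \<in> S\<close> assms(3) by auto
    ultimately show "assoc_oriented assoc q r \<in> {0,1} \<times> {0,1} \<and>
      (\<forall>w\<in>(\<lambda>v. restrict (nth v) S) ` block. (w q, w r) \<noteq> assoc_oriented assoc q r)"
      using range unfolding assoc_oriented_def block_def unmarked_def by auto
  next
    fix q r :: nat assume "r < q"
    then show "assoc_oriented assoc q r = prod.swap (assoc_oriented assoc r q)"
      unfolding assoc_oriented_def by simp
  qed
qed

lemma assoc_vectors_range:
  assumes "assoc_vectors a p d m A assoc"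
  shows "\<forall>q r. q < r \<and> r < m \<longrightarrow> assoc q r \<in> {0,1} \<times> {0,1}"
proof (intro allI impI)
  fix q r assume "q < r \<and> r < m"
  then have "assoc q r \<in> {(0,0), (0,1), (1,0), (1,1)}"
    using assms unfolding assoc_vectors_def by blast
  then show "assoc q r \<in> {0,1} \<times> {0,1}" by auto
qed

lemma card_unmarked_block_le:
  assumes "simple012 m A" and range: "\<forall>q r. q < r \<and> r < m \<longrightarrow> assoc q r \<in> {0,1} \<times> {0,1}"
    and "S \<subseteq> {..<m}"
    and "T_edge m assoc i j" "T_edge m assoc j k" "\<not> T_edge m assoc i k"
    and "i \<noteq> j" "j \<noteq> k" "i \<noteq> k"
  shows "card {v \<in> unmarked m A assoc. binary_rows m v = S} + of_bool ({i,j,k} \<subseteq> S) \<le> card S + 1"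
proof -
  let ?block = "{v \<in> unmarked m A assoc. binary_rows m v = S}"
  let ?X = "(\<lambda>v. restrict (nth v) S) ` ?block"
  note restricted = unmarked_block_restrict[OF assms(1-3)]
  have "finite S" using finite_subset[OF assms(3)] by simp
  have "card ?block = card ?X"
    using restricted(1) by (simp add: card_image)
  moreover have "card ?X + of_bool ({i,j,k} \<subseteq> S) \<le> card S + 1"
  proof (cases "{i,j,k} \<subseteq> S")
    case True
    have "card ?X \<le> card S"
    proof (rule card_avoids_pairs_intransitive_le[OF \<open>finite S\<close> restricted(2,3) True])
      show "i \<noteq> j" "j \<noteq> k" "i \<noteq> k" by fact+
      show "assoc_oriented assoc i j = (0,1)" "assoc_oriented assoc j k = (0,1)"
        "assoc_oriented assoc i k \<noteq> (0,1)"
        using assms(4-9) True assms(3) by (auto simp: T_edge_iff_assoc_oriented)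
    qed
    then show ?thesis using True by simp
  next
    case False
    then show ?thesis
      using card_avoids_pairs_le[OF \<open>finite S\<close> restricted(2,3)] by auto
  qed
  ultimately show ?thesis by simp
qed

lemma card_unmarked_le:
  assumes "simple012 m A" and range: "\<forall>q r. q < r \<and> r < m \<longrightarrow> assoc q r \<in> {0,1} \<times> {0,1}"
    and "T_edge m assoc i j" "T_edge m assoc j k" "\<not> T_edge m assoc i k"
    and "i \<noteq> j" "j \<noteq> k" "i \<noteq> k"
  shows "card (unmarked m A assoc) + 2 ^ (m - 3) \<le> m * 2 ^ (m - 1) + 2 ^ m"
proof -
  let ?P = "Pow {..<m}" and ?K = "{i,j,k}"
  let ?block = "\<lambda>S. {v \<in> unmarked m A assoc. binary_rows m v = S}"
  have "?K \<subseteq> {..<m}"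
    using assms(3,4) unfolding T_edge_def by auto
  have "unmarked m A assoc = (\<Union>S\<in>?P. ?block S)"
  proof (intro equalityI subsetI)
    fix v assume "v \<in> unmarked m A assoc"
    moreover have "binary_rows m v \<in> ?P" by (auto simp: binary_rows_def)
    ultimately show "v \<in> (\<Union>S\<in>?P. ?block S)" by blast
  qed auto
  then have "card (unmarked m A assoc) \<le> (\<Sum>S\<in>?P. card (?block S))"
    using card_UN_le[of ?P ?block] by simp
  moreover have "(\<Sum>S\<in>?P. card (?block S)) + (\<Sum>S\<in>?P. of_bool (?K \<subseteq> S)) \<le> (\<Sum>S\<in>?P. card S + 1)"
    unfolding sum.distrib[symmetric]
    by (intro sum_mono card_unmarked_block_le[OF assms(1,2) _ assms(3-8)]) simp
  moreover have "(\<Sum>S\<in>?P. of_bool (?K \<subseteq> S)) = (2::nat) ^ (m - 3)"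
  proof -
    have "?P \<inter> {S. ?K \<subseteq> S} = {S \<in> ?P. ?K \<subseteq> S}" by blast
    then show ?thesis
      using card_Pow_supersets[OF _ \<open>?K \<subseteq> {..<m}\<close>] assms(6-8) by simp
  qed
  moreover have "(\<Sum>S\<in>?P. card S + 1) = m * 2 ^ (m - 1) + 2 ^ m"
    unfolding sum.distrib by (simp add: sum_card_Pow card_Pow)
  ultimately show ?thesis by linarith
qed

theorem mainTheorem7:
  fixes p a d m :: nat and A :: "nat list set" and assoc :: "nat \<Rightarrow> nat \<Rightarrow> nat \<times> nat"
  assumes "p \<ge> 3" and "a \<le> p - 1" and "d \<le> p - 1" and "m \<ge> 3"
    and "simple012 m A"
    and "\<not> config 2 (Fmat a p p d) m A"
    and "assoc_vectors a p d m A assoc"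
    and "int (card (unmarked m A assoc)) > 2 ^ m + int m * 2 ^ (m - 1) - 2 ^ (m - 3)"
  shows "\<forall>i j k. i \<noteq> j \<and> j \<noteq> k \<and> i \<noteq> k \<and> T_edge m assoc i j \<and> T_edge m assoc j k
           \<longrightarrow> T_edge m assoc i k"
proof (intro allI impI, elim conjE)
  fix i j k
  assume distinct: "i \<noteq> j" "j \<noteq> k" "i \<noteq> k"
    and edges: "T_edge m assoc i j" "T_edge m assoc j k"
  note range = assoc_vectors_range[OF assms(7)]
  show "T_edge m assoc i k"
  proof (rule ccontr)
    assume "\<not> T_edge m assoc i k"
    with card_unmarked_le[OF assms(5) range edges _ distinct]
    have "card (unmarked m A assoc) + 2 ^ (m - 3) \<le> m * 2 ^ (m - 1) + 2 ^ m" .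
    then have "int (card (unmarked m A assoc) + 2 ^ (m - 3)) \<le> int (m * 2 ^ (m - 1) + 2 ^ m)"
      by (simp only: of_nat_le_iff)
    then have "int (card (unmarked m A assoc)) + 2 ^ (m - 3) \<le> int m * 2 ^ (m - 1) + 2 ^ m"
      by (simp only: of_nat_add of_nat_mult of_nat_power of_nat_numeral)
    with assms(8) show False by linarith
  qed
qed

end
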